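(* For $n\ge2$ and all $P,Q\in\Gamma_n$, $D_{I\Delta}(P\|Q)\le \frac23 D_{h\Delta}(P\|Q)$.
   Context: $\Gamma_n=\{P=(p_1,\dots,p_n): p_i>0,\ \sum p_i=1\}$. $h(P\|Q)=\frac12\sum_{i=1}^n(\sqrt{p_i}-\sqrt{q_i})^2$; $\Delta(P\|Q)=\sum_{i=1}^n\frac{(p_i-q_i)^2}{p_i+q_i}$; $I(P\|Q)=\frac12\Big[\sum_{i=1}^n p_i\ln\frac{2p_i}{p_i+q_i}+\sum_{i=1}^n q_i\ln\frac{2q_i}{p_i+q_i}\Big]$. $D_{I\Delta}=I-\frac14\Delta$, $D_{h\Delta}=h-\frac14\Delta$. *)

theory Defs
  imports Complex_Main
begin

definition Gamma :: "nat \<Rightarrow> (nat \<Rightarrow> real) set" where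
  "Gamma n = {p. (\<forall>i<n. p i > 0) \<and> (\<Sum>i<n. p i) = 1}"

definition hellinger :: "nat \<Rightarrow> (nat \<Rightarrow> real) \<Rightarrow> (nat \<Rightarrow> real) \<Rightarrow> real" where
  "hellinger n p q = (1/2) * (\<Sum>i<n. (sqrt (p i) - sqrt (q i))^2)"

definition triangular :: "nat \<Rightarrow> (nat \<Rightarrow> real) \<Rightarrow> (nat \<Rightarrow> real) \<Rightarrow> real" where
  "triangular n p q = (\<Sum>i<n. (p i - q i)^2 / (p i + q i))"

definition jsdiv :: "nat \<Rightarrow> (nat \<Rightarrow> real) \<Rightarrow> (nat \<Rightarrow> real) \<Rightarrow> real" where
  "jsdiv n p q = (1/2) * ((\<Sum>i<n. p i * ln (2 * p i / (p i + q i)))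
                        + (\<Sum>i<n. q i * ln (2 * q i / (p i + q i))))"

definition D_I_Delta :: "nat \<Rightarrow> (nat \<Rightarrow> real) \<Rightarrow> (nat \<Rightarrow> real) \<Rightarrow> real" where
  "D_I_Delta n p q = jsdiv n p q - (1/4) * triangular n p q"

definition D_h_Delta :: "nat \<Rightarrow> (nat \<Rightarrow> real) \<Rightarrow> (nat \<Rightarrow> real) \<Rightarrow> real" where
  "D_h_Delta n p q = hellinger n p q - (1/4) * triangular n p q"

end

theory Submission
  imports Defs
begin

text \<open>Everything is termwise. With
  \<open>c = (p+q)/2\<close> and \<open>p = c(1+t)\<close>, \<open>q = c(1-t)\<close>, the \<open>i\<close>-th term of
  \<open>(2/3) D_h_Delta - D_I_Delta\<close> is \<open>c \<cdot> js_gap t\<close> for an even function \<open>js_gap\<close> on \<open>(-1,1)\<close>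
  which vanishes at \<open>0\<close> together with its derivative, and whose second derivative is
  \<open>(s-1)\<^sup>2(s+2)/(3s\<^sup>3) \<ge> 0\<close> with \<open>s = sqrt(1-t\<^sup>2)\<close>.\<close>

definition js_gap :: "real \<Rightarrow> real" where
  "js_gap t = (2/3) * (1 - sqrt (1 - t\<^sup>2) - t\<^sup>2/2) - ((1+t) * ln (1+t) + (1-t) * ln (1-t))/2 + t\<^sup>2/2"

definition js_gap_deriv :: "real \<Rightarrow> real" where
  "js_gap_deriv t = (2/3) * t * (1 / sqrt (1 - t\<^sup>2) - 1) + t - (ln (1+t) - ln (1-t))/2"

lemma js_gap_deriv_has_derivative:
  fixes x :: real
  assumes "\<bar>x\<bar> < 1"
  defines "s \<equiv> sqrt (1 - x\<^sup>2)"
  shows "(js_gap_deriv has_real_derivative (s - 1)\<^sup>2 * (s + 2) / (3 * s^3)) (at x)"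
proof -
  have x2: "x\<^sup>2 < 1" using assms by (simp add: abs_square_less_1)
  have s_pos: "s > 0" and s_sq: "s\<^sup>2 = 1 - x\<^sup>2" using x2 by (simp_all add: s_def)
  have "1 + x > 0" "1 - x > 0" using assms by auto
  then have harmonic: "(2/(1+x) + 2/(1-x))/4 = 1/(1-x\<^sup>2)"
    using x2 by (simp add: field_simps power2_eq_square)
  have denom: "3 - x\<^sup>2 * 3 = 3 * s\<^sup>2" using s_sq by simp
  have "(js_gap_deriv has_real_derivative (2/3) * (1/s - 1) + (2/3) * x\<^sup>2 / s^3 + 1 - 1 / s\<^sup>2) (at x)"
    unfolding js_gap_deriv_def s_def using assms x2
    apply -
    apply (rule derivative_eq_intros refl | simp)+
    apply (fold s_def)
    apply (simp only: harmonic denom flip: s_sq)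
    using s_pos apply (simp add: power3_eq_cube power2_eq_square field_simps)
    done
  moreover have "(2/3) * (1/s - 1) + (2/3) * x\<^sup>2 / s^3 + 1 - 1 / s\<^sup>2
                   = (s - 1)\<^sup>2 * (s + 2) / (3 * s^3)"
  proof -
    have x_sq: "x\<^sup>2 = 1 - s\<^sup>2" using s_sq by simp
    show ?thesis
      unfolding x_sq using s_pos by (simp add: field_simps) (simp add: power_numeral_reduce algebra_simps)
  qed
  ultimately show ?thesis by simp
qed

lemma js_gap_has_derivative:
  fixes x :: real
  assumes "\<bar>x\<bar> < 1"
  shows "(js_gap has_real_derivative js_gap_deriv x) (at x)"
proof -
  have "x\<^sup>2 < 1" using assms by (simp add: abs_square_less_1)
  moreover have "1 + x > 0" "1 - x > 0" using assms by auto
  ultimately show ?thesis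
    unfolding js_gap_def js_gap_deriv_def
    apply -
    apply (rule derivative_eq_intros refl | simp)+
    apply (simp add: field_simps)
    done
qed

lemma js_gap_deriv_nonneg:
  assumes "0 \<le> t" "t < 1"
  shows "js_gap_deriv t \<ge> 0"
proof -
  have "js_gap_deriv 0 \<le> js_gap_deriv t"
  proof (rule DERIV_nonneg_imp_nondecreasing[OF assms(1)])
    fix x :: real assume "0 \<le> x" "x \<le> t"
    then have "\<bar>x\<bar> < 1" using assms by simp
    moreover have "sqrt (1 - x\<^sup>2) > 0" using calculation by (simp add: abs_square_less_1)
    ultimately show "\<exists>y. (js_gap_deriv has_real_derivative y) (at x) \<and> y \<ge> 0"
      using js_gap_deriv_has_derivative by force
  qed
  then show ?thesis by (simp add: js_gap_deriv_def)
qed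

lemma js_gap_nonneg_right:
  assumes "0 \<le> t" "t < 1"
  shows "js_gap t \<ge> 0"
proof -
  have "js_gap 0 \<le> js_gap t"
  proof (rule DERIV_nonneg_imp_nondecreasing[OF assms(1)])
    fix x :: real assume "0 \<le> x" "x \<le> t"
    then show "\<exists>y. (js_gap has_real_derivative y) (at x) \<and> y \<ge> 0"
      using assms js_gap_has_derivative js_gap_deriv_nonneg by (intro exI[of _ "js_gap_deriv x"]) auto
  qed
  then show ?thesis by (simp add: js_gap_def)
qed

lemma js_gap_nonneg:
  assumes "\<bar>t\<bar> < 1"
  shows "js_gap t \<ge> 0"
proof (cases "t \<ge> 0")
  case True
  then show ?thesis using assms js_gap_nonneg_right by simp
next
  case False
  have "js_gap t = js_gap (-t)" by (simp add: js_gap_def)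
  then show ?thesis using False assms js_gap_nonneg_right[of "-t"] by simp
qed

lemma js_term_le_hellinger_term:
  fixes p q :: real
  assumes p: "p > 0" and q: "q > 0"
  shows "(1/2) * (p * ln (2*p/(p+q)) + q * ln (2*q/(p+q))) - (1/4) * ((p-q)\<^sup>2/(p+q))
     \<le> (2/3) * ((1/2) * (sqrt p - sqrt q)\<^sup>2 - (1/4) * ((p-q)\<^sup>2/(p+q)))"
proof -
  define c where "c = (p+q)/2"
  define t where "t = (p-q)/(p+q)"
  have c_pos: "c > 0" using p q by (simp add: c_def)
  have p_eq: "p = c*(1+t)" and q_eq: "q = c*(1-t)" using p q by (simp_all add: c_def t_def field_simps)
  have t_bound: "\<bar>t\<bar> < 1" using p q by (simp add: t_def abs_less_iff field_simps)
  have ratio_p: "2*p/(p+q) = 1+t" and ratio_q: "2*q/(p+q) = 1-t"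
    using p q by (simp_all add: t_def field_simps)
  have "sqrt p * sqrt q = sqrt (c\<^sup>2 * (1-t\<^sup>2))"
    by (simp add: real_sqrt_mult[symmetric] p_eq q_eq power2_eq_square algebra_simps)
  also have "\<dots> = c * sqrt (1-t\<^sup>2)" using c_pos by (simp add: real_sqrt_mult)
  finally have geo_mean: "sqrt p * sqrt q = c * sqrt (1-t\<^sup>2)" .
  have hell: "(sqrt p - sqrt q)\<^sup>2 = p + q - 2 * (sqrt p * sqrt q)"
    using p q by (simp add: power2_eq_square algebra_simps)
  have tri: "(p-q)\<^sup>2/(p+q) = 2*c*t\<^sup>2" using c_pos by (simp add: p_eq q_eq field_simps power2_eq_square)
  have "(2/3) * ((1/2) * (sqrt p - sqrt q)\<^sup>2 - (1/4) * ((p-q)\<^sup>2/(p+q)))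
     - ((1/2) * (p * ln (2*p/(p+q)) + q * ln (2*q/(p+q))) - (1/4) * ((p-q)\<^sup>2/(p+q))) = c * js_gap t"
    unfolding hell geo_mean tri ratio_p ratio_q js_gap_def
    by (simp add: p_eq q_eq algebra_simps) (simp add: field_simps)
  moreover have "c * js_gap t \<ge> 0" using c_pos js_gap_nonneg[OF t_bound] by simp
  ultimately show ?thesis by linarith
qed

lemma D_I_Delta_le_D_h_Delta:
  assumes "\<And>i. i < n \<Longrightarrow> P i > 0 \<and> Q i > 0"
  shows "D_I_Delta n P Q \<le> (2/3) * D_h_Delta n P Q"
proof -
  have "(\<Sum>i<n. (1/2) * (P i * ln (2 * P i/(P i + Q i)) + Q i * ln (2 * Q i/(P i + Q i)))
                 - (1/4) * ((P i - Q i)\<^sup>2/(P i + Q i)))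
     \<le> (\<Sum>i<n. (2/3) * ((1/2) * (sqrt (P i) - sqrt (Q i))\<^sup>2 - (1/4) * ((P i - Q i)\<^sup>2/(P i + Q i))))"
    by (rule sum_mono) (use assms js_term_le_hellinger_term in auto)
  then show ?thesis
    unfolding D_I_Delta_def D_h_Delta_def jsdiv_def hellinger_def triangular_def
    by (simp add: sum_subtractf sum.distrib sum_distrib_left algebra_simps)
qed

theorem proposition5p1:
  fixes n :: nat and P Q :: "nat \<Rightarrow> real"
  assumes "n \<ge> 2" and "P \<in> Gamma n" and "Q \<in> Gamma n"
  shows "D_I_Delta n P Q \<le> (2/3) * D_h_Delta n P Q"
  using assms(2,3) by (intro D_I_Delta_le_D_h_Delta) (auto simp: Gamma_def)

end
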